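(* For any coprime $r>1$ and $0<a<r$, on the Danilov resolution of $\frac1r(1,a,r-a)$ the $\mathbb Q$-divisors $R_i$ satisfy, for all $i=0,\dots,r-1$ (indices mod $r$), \[X_i=D_X+R_i-R_{i+1},\qquad Y_i=D_Y+R_i-R_{i+a},\qquad Z_i=D_Z+R_i-R_{i-a}.\]
   Context: Notation: for integers $s$ and $t>0$, $\langle s\rangle_t$ is the least non-negative integer congruent to $s$ modulo $t$. A pair of integers $(r,a)$ is admissible if $r\ge1$, $0\le a<r$, $\gcd(r,a)=1$ (so $a=0$ only for $r=1$). For admissible $(r,a)$ put $N(r,a)=\mathbb Z^3+\mathbb Z\cdot\frac1r(1,a,r-a)\subset\mathbb Q^3$; $e_1,e_2,e_3$ is the standard basis, $e_j^*$ the $j$-th coordinate function, and $\Delta(r,a)$ the cone spanned by $e_1,e_2,e_3$. Let $b$ be an inverse of $a$ modulo $r$ and $p_i=\frac1r(\langle -ib\rangle_r,r-i,i)$, $i=0,\dots,r$ (so $p_0=e_2$, $p_r=e_3$, $p_{r-a}=\frac1r(1,a,r-a)$). For $r>1$ let $(r_L,a_L)=(r-a,\langle r\rangle_{r-a})$, $(r_R,a_R)=(a,\langle -r\rangle_a)$; there are lattice isomorphisms $L:N(r_L,a_L)\to N(r,a)$, $R:N(r_R,a_R)\to N(r,a)$ with $L(e_1)=e_1$, $L(e_2)=e_2$, $L(e_3)=p_{r-a}$, $R(e_1)=e_1$, $R(e_2)=p_{r-a}$, $R(e_3)=e_3$. The Danilov fan $\Sigma(r,a)$ is defined recursively: $\Sigma(1,0)$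 is $\Delta(1,0)$ with its faces; for $r>1$, $\Sigma(r,a)$ consists of the cone spanned by $e_2,e_3,p_{r-a}$ with its faces, together with $L(\Sigma(r_L,a_L))$ and $R(\Sigma(r_R,a_R))$. The Danilov resolution $Y$ is the smooth toric variety of $\Sigma(r,a)$, with torus $T$; its rays are spanned by $e_1,p_0,\dots,p_r$; $D_i$ is the $T$-invariant prime divisor of the ray through $p_i$ and $E_j$ that of $e_j$. The permutation $\tau(r,a,\cdot)$ of $\{0,\dots,r-1\}$: if $a\in\{1,r-1\}$, $\tau(r,a,i)=\langle ai-1\rangle_r$; otherwise $\tau(r,a,i)=\tau(r-a,\langle r\rangle_{r-a},\langle i\rangle_{r-a})$ for $i\ge a$ and $\tau(r,a,i)=(r-a)+\tau(a,\langle -r\rangle_a,i)$ for $i<a$. With indices mod $r$, on $Y$ define $Y_{i-a}=\sum_{k=0}^{\tau(r,a,i)}D_k$, $Z_i=\sum_{k=\tau(r,a,i)+1}^{r}D_k$ ($i=0,\dots,r-1$), and $X_0,\dots,X_{r-1}$ the unique divisors with $X_0=E_1$ and $X_i+Z_{i+1}=Z_i+X_{i-a}$ for all $i$. Define the $\mathbb Q$-divisors $D_X=E_1+\sum_{i=0}^r e_1^*(p_i)D_i$, $D_Y=\sum_{i=0}^r e_2^*(p_i)D_i$, $D_Z=\sum_{i=0}^r e_3^*(p_i)D_i$, and let $R_0,\dots,R_{r-1}$ be the unique $\mathbb Q$-divisors with $R_0=0$ and $Z_i=D_Z+R_i-R_{i-a}$ for all $i$. *)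

theory Defs
  imports Complex_Main "HOL-Library.Function_Algebras"
begin

text \<open>T-invariant prime divisors of the Danilov resolution Y: one for each ray.
  The rays are spanned by e_1 (divisor E_1) and p_0,...,p_r (divisors D_0,...,D_r).
  A T-invariant Q-divisor is a Q-linear combination of these, i.e. a function
  from ray labels to rat (labels Dr k with k > r never occur with nonzero coefficient).\<close>

datatype ray = E1 | Dr nat

type_synonym qdiv = "ray \<Rightarrow> rat"

definition E1div :: qdiv where
  "E1div = (\<lambda>\<rho>. if \<rho> = E1 then 1 else 0)"

text \<open>An inverse b of a modulo r (the choice does not matter, only b mod r is used).\<close>
definition inv_b :: "int \<Rightarrow> int \<Rightarrow> int" where
  "inv_b r a = (SOME b. (a * b) mod r = 1 mod r)"

text \<open>Coordinates of p_i = (1/r)(<-ib>_r, r-i, i).\<close>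
definition pcoord1 :: "int \<Rightarrow> int \<Rightarrow> nat \<Rightarrow> rat" where
  "pcoord1 r a i = of_int ((- int i * inv_b r a) mod r) / of_int r"
definition pcoord2 :: "int \<Rightarrow> int \<Rightarrow> nat \<Rightarrow> rat" where
  "pcoord2 r a i = of_int (r - int i) / of_int r"
definition pcoord3 :: "int \<Rightarrow> int \<Rightarrow> nat \<Rightarrow> rat" where
  "pcoord3 r a i = of_int (int i) / of_int r"

text \<open>The permutation tau(r,a,.) (outside admissible inputs the first branch is used;
  this never matters for admissible (r,a), 0 <= i < r).\<close>
function tau :: "int \<Rightarrow> int \<Rightarrow> int \<Rightarrow> int" where
  "tau r a i =
    (if a = 1 \<or> a = r - 1 \<or> a \<le> 0 \<or> a \<ge> r then (a * i - 1) mod r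
     else if i \<ge> a then tau (r - a) (r mod (r - a)) (i mod (r - a))
     else (r - a) + tau a ((- r) mod a) i)"
  by pat_completeness auto
termination by (relation "measure (\<lambda>(r, a, i). nat r)") auto

text \<open>Y_{i-a} = sum_{k=0}^{tau(r,a,i)} D_k, so Y_j = sum_{k=0}^{tau(r,a,<j+a>_r)} D_k;
  Z_i = sum_{k=tau(r,a,i)+1}^{r} D_k. Indices are integers taken mod r.\<close>
definition Ydiv :: "int \<Rightarrow> int \<Rightarrow> int \<Rightarrow> qdiv" where
  "Ydiv r a j = (\<lambda>\<rho>. case \<rho> of E1 \<Rightarrow> 0
     | Dr k \<Rightarrow> if int k \<le> tau r a ((j + a) mod r) then 1 else 0)"

definition Zdiv :: "int \<Rightarrow> int \<Rightarrow> int \<Rightarrow> qdiv" where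
  "Zdiv r a i = (\<lambda>\<rho>. case \<rho> of E1 \<Rightarrow> 0
     | Dr k \<Rightarrow> if tau r a (i mod r) < int k \<and> int k \<le> r then 1 else 0)"

definition Xdiv :: "int \<Rightarrow> int \<Rightarrow> int \<Rightarrow> qdiv" where
  "Xdiv r a = (THE X. (\<forall>i. X i = X (i mod r)) \<and> X 0 = E1div \<and>
      (\<forall>i. X i + Zdiv r a (i + 1) = Zdiv r a i + X (i - a)))"

definition DX :: "int \<Rightarrow> int \<Rightarrow> qdiv" where
  "DX r a = (\<lambda>\<rho>. case \<rho> of E1 \<Rightarrow> 1
     | Dr k \<Rightarrow> if int k \<le> r then pcoord1 r a k else 0)"
definition DY :: "int \<Rightarrow> int \<Rightarrow> qdiv" where
  "DY r a = (\<lambda>\<rho>. case \<rho> of E1 \<Rightarrow> 0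
     | Dr k \<Rightarrow> if int k \<le> r then pcoord2 r a k else 0)"
definition DZ :: "int \<Rightarrow> int \<Rightarrow> qdiv" where
  "DZ r a = (\<lambda>\<rho>. case \<rho> of E1 \<Rightarrow> 0
     | Dr k \<Rightarrow> if int k \<le> r then pcoord3 r a k else 0)"

definition Rdiv :: "int \<Rightarrow> int \<Rightarrow> int \<Rightarrow> qdiv" where
  "Rdiv r a = (THE R. (\<forall>i. R i = R (i mod r)) \<and> R 0 = 0 \<and>
      (\<forall>i. Zdiv r a i = DZ r a + R i - R (i - a)))"

end

theory Submission
  imports Defs "HOL-Number_Theory.Cong"
begin

text \<open>Fix b with a * b = 1 (mod r) and 0 < b < r, and put
  R_i = sum_{t=1}^{<i b>_r} (Z_{t a} - D_Z).
  Consecutive sums differ by the single term Z_{<i b>_r a} - D_Z = Z_i - D_Z, and the sum over a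
  full orbit vanishes because tau is a permutation; this gives the relation for Z.
  The recurrences defining R and X have unique periodic solutions, as i |-> i - a acts transitively
  on Z/r, so the relation for X reduces to X_0 = E_1, i.e. D_X = E_1 + R_1, and the one for Y
  to Y_i + Z_{i+a} = D_Y + D_Z.
  Comparing coefficients, D_X = E_1 + R_1 says #{1 <= t <= b. tau <t a>_r < k} = ceiling (k b / r).
  This count follows from the invariance property: tau i + 1 is congruent to one of a, 2a, ..., b a
  exactly when i is. It is proved by induction along the recursion of tau, transferring these
  multiples to the analogous ones for the pairs (r - a, <r>_{r-a}) and (a, <-r>_a), whose inverses
  are b - c and c with c = (a b) div r.\<close>

section \<open>The permutation tau\<close>

declare tau.simps [simp del]

definition admissible :: "int \<Rightarrow> int \<Rightarrow> bool" where
  "admissible r a \<longleftrightarrow> 1 < r \<and> 0 < a \<and> a < r \<and> coprime r a"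

lemma tau_edge: "a = 1 \<or> a = r - 1 \<Longrightarrow> tau r a i = (a * i - 1) mod r"
  by (subst tau.simps) auto

lemma tau_left:
  "1 < a \<Longrightarrow> a < r - 1 \<Longrightarrow> a \<le> i \<Longrightarrow> tau r a i = tau (r - a) (r mod (r - a)) (i mod (r - a))"
  by (subst tau.simps) auto

lemma tau_right:
  "1 < a \<Longrightarrow> a < r - 1 \<Longrightarrow> i < a \<Longrightarrow> tau r a i = (r - a) + tau a ((- r) mod a) i"
  by (subst tau.simps) auto

lemma admissible_left:
  assumes "admissible r a" "1 < a" "a < r - 1"
  shows "admissible (r - a) (r mod (r - a))"
proof -
  have "coprime (r - a) r"
    using assms(1) gcd_diff2[of r a] by (simp add: admissible_def coprime_iff_gcd_eq_1 gcd.commute)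
  then have coprime: "coprime (r - a) (r mod (r - a))"
    using assms(3) by simp
  have "r mod (r - a) \<noteq> 0"
  proof
    assume "r mod (r - a) = 0"
    with coprime have "is_unit (r - a)" by simp
    with assms(3) show False by simp
  qed
  moreover have "r mod (r - a) < r - a"
    using assms(3) by simp
  ultimately show ?thesis
    using coprime assms(3) unfolding admissible_def by (simp add: order_less_le)
qed

lemma admissible_right:
  assumes "admissible r a" "1 < a" "a < r - 1"
  shows "admissible a ((- r) mod a)"
proof -
  have coprime: "coprime a ((- r) mod a)"
    using assms(1) by (simp add: admissible_def coprime_commute)
  have "(- r) mod a \<noteq> 0"
  proof
    assume "(- r) mod a = 0"
    with coprime have "is_unit a" by simp
    with assms(2) show False by simp
  qed
  moreover have "(- r) mod a < a"
    using assms(2) by simp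
  ultimately show ?thesis
    using coprime assms(2) unfolding admissible_def by (simp add: order_less_le)
qed

lemma admissible_induct [consumes 1, case_names edge split]:
  assumes "admissible r a"
    and edge: "\<And>r a. admissible r a \<Longrightarrow> a = 1 \<or> a = r - 1 \<Longrightarrow> P r a"
    and split: "\<And>r a. admissible r a \<Longrightarrow> 1 < a \<Longrightarrow> a < r - 1 \<Longrightarrow>
      P (r - a) (r mod (r - a)) \<Longrightarrow> P a ((- r) mod a) \<Longrightarrow> P r a"
  shows "P r a"
  using assms(1)
proof (induction "nat r" arbitrary: r a rule: less_induct)
  case less
  show ?case
  proof (cases "a = 1 \<or> a = r - 1")
    case True
    with less.prems show ?thesis by (rule edge)
  next
    case False
    with less.prems have a: "1 < a" "a < r - 1"
      unfolding admissible_def by auto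
    show ?thesis
    proof (rule split[OF less.prems a])
      show "P (r - a) (r mod (r - a))" "P a ((- r) mod a)"
        using less.hyps admissible_left[OF less.prems a] admissible_right[OF less.prems a] a
        by auto
    qed
  qed
qed

lemma bij_betw_if_inj_on_card:
  assumes "inj_on f A" "f ` A \<subseteq> B" "card A = card B" "finite B"
  shows "bij_betw f A B"
  using assms by (metis bij_betw_imageI card_image card_subset_eq)

lemma bij_betw_mod_interval:
  fixes s c :: int
  assumes "0 < s"
  shows "bij_betw (\<lambda>i. i mod s) {c..<c + s} {0..<s}"
proof (rule bij_betw_if_inj_on_card)
  show "inj_on (\<lambda>i. i mod s) {c..<c + s}"
  proof (rule inj_onI)
    fix i j assume ij: "i \<in> {c..<c + s}" "j \<in> {c..<c + s}" "i mod s = j mod s"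
    show "i = j"
    proof (rule ccontr)
      assume "i \<noteq> j"
      moreover have "s dvd i - j"
        using ij(3) by (simp add: mod_eq_dvd_iff)
      ultimately have "\<bar>s\<bar> \<le> \<bar>i - j\<bar>"
        by (intro dvd_imp_le_int) auto
      with ij(1,2) show False by auto
    qed
  qed
qed (use assms in auto)

lemma bij_betw_affine_mod:
  fixes r a c d :: int
  assumes "0 < r" "coprime r a"
  shows "bij_betw (\<lambda>x. (a * x + c) mod r) {d..<d + r} {0..<r}"
proof (rule bij_betw_if_inj_on_card)
  show "inj_on (\<lambda>x. (a * x + c) mod r) {d..<d + r}"
  proof (rule inj_onI)
    fix x y assume xy: "x \<in> {d..<d + r}" "y \<in> {d..<d + r}" "(a * x + c) mod r = (a * y + c) mod r"
    then have "r dvd a * (x - y)"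
      by (simp add: mod_eq_dvd_iff algebra_simps)
    with assms(2) have "r dvd x - y"
      by (simp add: coprime_dvd_mult_right_iff)
    then have "x mod r = y mod r"
      by (simp add: mod_eq_dvd_iff)
    with bij_betw_mod_interval[OF assms(1), of d] xy(1,2) show "x = y"
      by (auto simp: bij_betw_def dest: inj_onD)
  qed
qed (use assms in auto)

lemma tau_bij:
  assumes "admissible r a"
  shows "bij_betw (tau r a) {0..<r} {0..<r}"
  using assms
proof (induction rule: admissible_induct)
  case (edge r a)
  then have "bij_betw (\<lambda>i. (a * i + - 1) mod r) {0..<0 + r} {0..<r}"
    by (intro bij_betw_affine_mod) (auto simp: admissible_def)
  with edge(2) show ?case
    by (simp add: tau_edge)
next
  case (split r a)
  define s where "s = r - a"
  have "bij_betw (\<lambda>i. i mod s) {a..<a + s} {0..<s}"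
    using split.hyps by (intro bij_betw_mod_interval) (simp add: s_def)
  then have "bij_betw (tau s (r mod s) \<circ> (\<lambda>i. i mod s)) {a..<r} {0..<s}"
    using split.IH(1) by (intro bij_betw_trans) (simp_all add: s_def)
  then have left: "bij_betw (tau r a) {a..<r} {0..<s}"
    by (rule bij_betw_cong[THEN iffD1, rotated]) (simp_all add: s_def tau_left split.hyps)
  have "bij_betw ((+) s \<circ> tau a ((- r) mod a)) {0..<a} {s..<r}"
    using split.IH(2) by (intro bij_betw_trans) (auto simp: bij_betw_add s_def)
  then have right: "bij_betw (tau r a) {0..<a} {s..<r}"
    by (rule bij_betw_cong[THEN iffD1, rotated]) (simp add: s_def tau_right split.hyps)
  have "bij_betw (tau r a) ({a..<r} \<union> {0..<a}) ({0..<s} \<union> {s..<r})"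
    by (rule bij_betw_combine[OF left right]) auto
  moreover have "{a..<r} \<union> {0..<a} = {0..<r}" "{0..<s} \<union> {s..<r} = {0..<r}"
    using split.hyps by (auto simp: s_def)
  ultimately show ?case by simp
qed

section \<open>Modular inverses along the recursion\<close>

definition is_mod_inverse :: "int \<Rightarrow> int \<Rightarrow> int \<Rightarrow> bool" where
  "is_mod_inverse r a b \<longleftrightarrow> admissible r a \<and> 0 < b \<and> b < r \<and> (a * b) mod r = 1"

lemma is_mod_inverse_inv_b:
  assumes "admissible r a"
  shows "is_mod_inverse r a (inv_b r a mod r)"
proof -
  have "\<exists>b. (a * b) mod r = 1 mod r"
    using assms coprime_iff_invertible_int[of a r]
    by (auto simp: admissible_def coprime_commute cong_def)
  then have "(a * inv_b r a) mod r = 1 mod r"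
    unfolding inv_b_def by (rule someI_ex)
  then have inverse: "(a * (inv_b r a mod r)) mod r = 1"
    using assms by (simp add: admissible_def mod_mult_right_eq)
  moreover have "inv_b r a mod r \<noteq> 0"
    using inverse by auto
  moreover have "0 \<le> inv_b r a mod r" "inv_b r a mod r < r"
    using assms by (simp_all add: admissible_def)
  ultimately show ?thesis
    using assms by (simp add: is_mod_inverse_def)
qed

lemma is_mod_inverse_edge:
  assumes "is_mod_inverse r a b" "a = 1 \<or> a = r - 1"
  shows "b = a"
proof -
  have b: "0 < b" "b < r" "(a * b) mod r = 1"
    using assms(1) by (auto simp: is_mod_inverse_def)
  have "(r - 1) * b = - b + b * r"
    by (simp add: algebra_simps)
  then have "((r - 1) * b) mod r = (- b) mod r"
    by (simp only: mod_mult_self1)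
  also have "\<dots> = r - b"
    using b by (simp add: zmod_zminus1_eq_if)
  finally show ?thesis
    using assms(2) b by auto
qed

lemma mod_inverse_quotient_bounds:
  assumes "is_mod_inverse r a b" "1 < a"
  shows "0 < (a * b) div r" "(a * b) div r < a" "(a * b) div r < b"
    and "a * b = 1 + (a * b) div r * r"
proof -
  have b: "1 < r" "a < r" "0 < b" "b < r" "(a * b) mod r = 1"
    using assms(1) by (auto simp: is_mod_inverse_def admissible_def)
  then show ab: "a * b = 1 + (a * b) div r * r"
    by (metis add.commute div_mult_mod_eq)
  have "a \<le> a * b"
    using assms(2) b(3) by simp
  then have "1 < a * b"
    using assms(2) by linarith
  with ab have "0 < (a * b) div r * r"
    by linarith
  with b(1) show "0 < (a * b) div r"
    by (simp add: zero_less_mult_iff)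
  have "a * b < a * r" "a * b < r * b"
    using assms(2) b by simp_all
  then have "(a * b) div r * r < a * r" "(a * b) div r * r < b * r"
    using ab by (simp_all add: mult.commute)
  with b(1) show "(a * b) div r < a" "(a * b) div r < b"
    by simp_all
qed

lemma is_mod_inverse_left:
  assumes "is_mod_inverse r a b" "1 < a" "a < r - 1"
  shows "is_mod_inverse (r - a) (r mod (r - a)) (b - (a * b) div r)"
proof -
  define s c where "s = r - a" and "c = (a * b) div r"
  have c: "0 < c" "c < a" "c < b" and ab: "a * b = 1 + c * r"
    using mod_inverse_quotient_bounds[OF assms(1,2)] by (simp_all add: c_def)
  have bc: "(b - c) * a = 1 + c * s"
    using ab by (simp add: s_def algebra_simps)
  have "c * s \<le> (a - 1) * s"
    using c assms(3) by (simp add: s_def mult_right_mono)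
  then have "(b - c) * a < s * a"
    using bc assms(3) by (simp add: s_def algebra_simps)
  then have "b - c < s"
    using assms(2) by simp
  moreover have "(r mod s * (b - c)) mod s = 1"
  proof -
    have "(r mod s * (b - c)) mod s = (r * (b - c)) mod s"
      by (simp add: mod_mult_left_eq)
    also have "r * (b - c) = (b - c) * a + (b - c) * s"
      by (simp add: s_def algebra_simps)
    also have "((b - c) * a + (b - c) * s) mod s = (1 + c * s) mod s"
      using bc by simp
    also have "\<dots> = 1"
      using assms(3) by (simp add: s_def)
    finally show ?thesis .
  qed
  ultimately show ?thesis
    using admissible_left[of r a] assms c
    by (simp add: is_mod_inverse_def s_def c_def)
qed

lemma is_mod_inverse_right:
  assumes "is_mod_inverse r a b" "1 < a" "a < r - 1"
  shows "is_mod_inverse a ((- r) mod a) ((a * b) div r)"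
proof -
  define c where "c = (a * b) div r"
  have c: "0 < c" "c < a" and ab: "a * b = 1 + c * r"
    using mod_inverse_quotient_bounds[OF assms(1,2)] by (simp_all add: c_def)
  have "((- r) mod a * c) mod a = (- r * c) mod a"
    by (simp add: mod_mult_left_eq)
  also have "- r * c = 1 + (- b) * a"
    using ab by (simp add: algebra_simps)
  also have "(1 + (- b) * a) mod a = 1 mod a"
    by (rule mod_mult_self1)
  also have "\<dots> = 1"
    using assms(2) by simp
  finally show ?thesis
    using admissible_right[of r a] assms c
    by (simp add: is_mod_inverse_def c_def)
qed

section \<open>Small multiples\<close>

definition small_multiple :: "int \<Rightarrow> int \<Rightarrow> int \<Rightarrow> int \<Rightarrow> bool" where
  "small_multiple r a b x \<longleftrightarrow> (\<exists>t\<in>{1..b}. (t * a) mod r = x mod r)"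

lemma small_multiple_cong:
  "x mod r = y mod r \<Longrightarrow> small_multiple r a b x = small_multiple r a b y"
  by (simp add: small_multiple_def)

lemma small_multiple_mod [simp]: "small_multiple r a b (x mod r) = small_multiple r a b x"
  by (simp add: small_multiple_def)

lemma mod_inverse_cancel:
  fixes r a b x :: int
  assumes "(a * b) mod r = 1"
  shows "((x * b) mod r * a) mod r = x mod r"
proof -
  have "((x * b) mod r * a) mod r = (x * (a * b)) mod r"
    unfolding mod_mult_left_eq by (simp add: ac_simps)
  also have "\<dots> = (x * ((a * b) mod r)) mod r"
    by (simp add: mod_mult_right_eq)
  finally show ?thesis
    using assms by simp
qed

lemma small_multiple_iff_mod:
  assumes "is_mod_inverse r a b"
  shows "small_multiple r a b x \<longleftrightarrow> (x * b) mod r \<in> {1..b}"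
proof -
  have ab: "(a * b) mod r = 1" "(b * a) mod r = 1"
    using assms by (simp_all add: is_mod_inverse_def mult.commute)
  have "(t * a) mod r = x mod r \<longleftrightarrow> t = (x * b) mod r" if "t \<in> {1..b}" for t
  proof
    assume "(t * a) mod r = x mod r"
    then have "(x * b) mod r = ((t * a) mod r * b) mod r"
      by (simp add: mod_mult_left_eq)
    also have "\<dots> = t"
      using mod_inverse_cancel[OF ab(2), of t] assms that by (simp add: is_mod_inverse_def)
    finally show "t = (x * b) mod r" ..
  next
    assume "t = (x * b) mod r"
    then show "(t * a) mod r = x mod r"
      using mod_inverse_cancel[OF ab(1), of x] by simp
  qed
  then show ?thesis
    unfolding small_multiple_def by auto
qed

lemma small_multiple_one: "is_mod_inverse r a b \<Longrightarrow> small_multiple r a b 1"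
  by (simp add: small_multiple_iff_mod is_mod_inverse_def)

lemma not_small_multiple_zero: "is_mod_inverse r a b \<Longrightarrow> \<not> small_multiple r a b 0"
  by (simp add: small_multiple_iff_mod)

lemma not_small_multiple_modulus: "is_mod_inverse r a b \<Longrightarrow> \<not> small_multiple r a b r"
  using not_small_multiple_zero small_multiple_cong[of r r 0] by simp

lemma small_multiple_shift:
  assumes "is_mod_inverse r a b" "x mod r \<noteq> 0" "x mod r \<noteq> 1"
  shows "small_multiple r a b (x + a) = small_multiple r a b x"
proof -
  have r: "0 < b" "b < r" and ab: "(a * b) mod r = 1"
    using assms(1) by (auto simp: is_mod_inverse_def)
  define u where "u = (x * b) mod r"
  have u: "0 \<le> u" "u < r"
    using r by (simp_all add: u_def)
  have x: "x mod r = (u * a) mod r"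
    using mod_inverse_cancel[OF ab, of x] by (simp add: u_def)
  have "u \<noteq> 0"
    using x assms(2) by auto
  have "u \<noteq> b"
    using x assms(3) ab by (auto simp: mult.commute)
  have "((x + a) * b) mod r = ((x * b) mod r + (a * b) mod r) mod r"
    by (simp add: distrib_right mod_add_eq)
  then have xa: "((x + a) * b) mod r = (u + 1) mod r"
    by (simp add: ab u_def)
  have "(u + 1) mod r \<in> {1..b} \<longleftrightarrow> u \<in> {1..b}"
  proof (cases "u + 1 = r")
    case True
    then show ?thesis
      using \<open>u \<noteq> b\<close> r by auto
  next
    case False
    then have "(u + 1) mod r = u + 1"
      using u by simp
    then show ?thesis
      using \<open>u \<noteq> 0\<close> \<open>u \<noteq> b\<close> by auto
  qed
  then show ?thesis
    by (simp add: small_multiple_iff_mod[OF assms(1)] xa u_def)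
qed

lemma small_multiple_neg:
  assumes "is_mod_inverse r (r - 1) b"
  shows "small_multiple r (r - 1) b (- x) = small_multiple r (r - 1) b x"
proof -
  have b: "b = r - 1"
    using is_mod_inverse_edge[OF assms] by simp
  have "0 < r"
    using assms by (simp add: is_mod_inverse_def admissible_def)
  have "small_multiple r (r - 1) b y \<longleftrightarrow> \<not> r dvd y" for y
  proof -
    have "y * b = - y + y * r"
      by (simp add: b algebra_simps)
    then have "(y * b) mod r = (- y) mod r"
      by (simp only: mod_mult_self1)
    then have "small_multiple r (r - 1) b y \<longleftrightarrow> (- y) mod r \<in> {1..r - 1}"
      unfolding small_multiple_iff_mod[OF assms] by (simp add: b)
    also have "\<dots> \<longleftrightarrow> (- y) mod r \<noteq> 0"
      using pos_mod_sign[of r "- y"] pos_mod_bound[of r "- y"] \<open>0 < r\<close>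
      by (auto simp del: pos_mod_sign pos_mod_bound)
    finally show ?thesis
      by (simp add: mod_eq_0_iff_dvd)
  qed
  then show ?thesis
    by simp
qed

lemma small_multiple_multiplier_cong:
  assumes "a mod r = a' mod r"
  shows "small_multiple r a b x = small_multiple r a' b x"
proof -
  have "(t * a) mod r = (t * a') mod r" for t
    by (rule mod_mult_cong[OF refl assms])
  then show ?thesis
    by (simp add: small_multiple_def)
qed

lemma small_multiple_to_right:
  fixes r a b c i :: int
  assumes r: "1 < r" and a: "0 < a" "a < r" and ab: "a * b = 1 + c * r"
    and i: "0 \<le> i" "i < a" and "small_multiple r a b i"
  shows "small_multiple a (- r) c i"
proof -
  obtain t where t: "t \<in> {1..b}" "(t * a) mod r = i"
    using assms(7) a i by (auto simp: small_multiple_def)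
  define q where "q = (t * a) div r"
  have ta: "t * a = q * r + i"
    using t(2) div_mult_mod_eq[of "t * a" r] by (simp add: q_def)
  have "a \<le> t * a"
    using t(1) a by simp
  then have "0 < q * r"
    using ta i by linarith
  then have "1 \<le> q"
    using r by (simp add: zero_less_mult_iff)
  have "q * r + i \<le> 1 + c * r"
    using ta ab t(1) a mult_right_mono[of t b a] by (simp add: mult.commute)
  then have "q * r < (c + 1) * r"
    using i r by (simp add: algebra_simps)
  then have "q \<le> c"
    using r by simp
  have "q * (- r) = i + (- t) * a"
    using ta by (simp add: algebra_simps)
  then have "(q * (- r)) mod a = i mod a"
    by (simp only: mod_mult_self1)
  then show ?thesis
    unfolding small_multiple_def using \<open>1 \<le> q\<close> \<open>q \<le> c\<close> by auto
qed

lemma small_multiple_from_right: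
  fixes r a b c i :: int
  assumes r: "1 < r" and a: "0 < a" and ab: "a * b = 1 + c * r"
    and i: "0 \<le> i" "i < a" and "small_multiple a (- r) c i"
  shows "small_multiple r a b i"
proof -
  obtain u where u: "u \<in> {1..c}" "(u * (- r)) mod a = i mod a"
    using assms(6) by (auto simp: small_multiple_def)
  then have "a dvd u * (- r) - i"
    by (simp only: mod_eq_dvd_iff)
  moreover have "u * (- r) - i = - (i + u * r)"
    by simp
  ultimately have "a dvd i + u * r"
    by (metis dvd_minus_iff)
  then obtain v where v: "i + u * r = a * v"
    by (auto simp: dvd_def)
  have "r \<le> u * r"
    using u(1) r by simp
  then have "0 < a * v"
    using v i r by linarith
  then have "1 \<le> v"
    using a by (simp add: zero_less_mult_iff)
  have "u * r \<le> c * r"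
    using u(1) r by (simp add: mult_right_mono)
  then have "a * v < a * (b + 1)"
    using v ab i by (simp add: algebra_simps)
  then have "v \<le> b"
    using a by simp
  have "(v * a) mod r = (i + u * r) mod r"
    using v by (simp add: mult.commute)
  then have "(v * a) mod r = i mod r"
    by simp
  then show ?thesis
    unfolding small_multiple_def using \<open>1 \<le> v\<close> \<open>v \<le> b\<close> by auto
qed

lemma small_multiple_right_transfer:
  fixes r a b c i :: int
  assumes "1 < r" "0 < a" "a < r" "a * b = 1 + c * r" "0 \<le> i" "i < a"
  shows "small_multiple r a b i \<longleftrightarrow> small_multiple a ((- r) mod a) c i"
  using small_multiple_to_right[OF assms] small_multiple_from_right[OF assms(1,2,4,5,6)]
    small_multiple_multiplier_cong[of "- r" a "(- r) mod a" c i]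
  by auto

lemma small_multiple_to_left:
  fixes r a b c s i :: int
  assumes a: "1 < a" and s: "0 < s" "r = a + s" and ab: "a * b = 1 + c * r"
    and i: "a \<le> i" "i < r" and "small_multiple r a b i"
  shows "small_multiple s a (b - c) i"
proof -
  obtain t where t: "t \<in> {1..b}" "(t * a) mod r = i"
    using assms(7) a i by (auto simp: small_multiple_def)
  define q where "q = (t * a) div r"
  have ta: "t * a = q * r + i"
    using t(2) div_mult_mod_eq[of "t * a" r] by (simp add: q_def)
  have "0 \<le> q"
    using t(1) a s by (simp add: q_def pos_imp_zdiv_nonneg_iff)
  have bc: "(b - c) * a = 1 + c * s"
    using ab s(2) by (simp add: algebra_simps)
  define u where "u = t - q"
  have ua: "u * a = q * s + i"
    using ta s(2) by (simp add: u_def algebra_simps)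
  then have "0 < u * a"
    using \<open>0 \<le> q\<close> s(1) a i by (smt (verit) mult_nonneg_nonneg)
  then have "1 \<le> u"
    using a by (simp add: zero_less_mult_iff)
  have "u \<le> b - c"
  proof (rule ccontr)
    assume "\<not> u \<le> b - c"
    then have "(b - c + 1) * a \<le> u * a"
      using a by (simp add: mult_right_mono)
    then have "c * s < (q + 1) * s"
      using bc ua i s(2) by (simp add: algebra_simps)
    then have "c \<le> q"
      using s(1) by simp
    with \<open>\<not> u \<le> b - c\<close> t(1) show False
      by (simp add: u_def)
  qed
  have "(u * a) mod s = i mod s"
    using ua by simp
  then show ?thesis
    unfolding small_multiple_def using \<open>1 \<le> u\<close> \<open>u \<le> b - c\<close> by auto
qed

lemma small_multiple_from_left:
  fixes r a b c s i :: int
  assumes a: "1 < a" and s: "0 < s" "r = a + s" and ab: "a * b = 1 + c * r"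
    and i: "a \<le> i" "i < r" and "small_multiple s a (b - c) i"
  shows "small_multiple r a b i"
proof -
  have bc: "(b - c) * a = 1 + c * s"
    using ab s(2) by (simp add: algebra_simps)
  obtain u where u: "u \<in> {1..b - c}" "(u * a) mod s = i mod s"
    using assms(7) by (auto simp: small_multiple_def)
  then obtain w where w: "u * a - i = s * w"
    by (auto simp: mod_eq_dvd_iff dvd_def)
  have "a \<le> u * a"
    using u(1) a by simp
  then have "s * (- 1) < s * w"
    using w i s(2) by simp
  then have "0 \<le> w"
    using s(1) by (simp only: mult_less_cancel_left_pos)
  have "(u - 1) * a \<le> (b - c - 1) * a"
    using u(1) a by (simp add: mult_right_mono)
  then have "s * w < s * c"
    using w i bc a by (simp add: algebra_simps)
  then have "w < c"
    using s(1) by simp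
  have "((u + w) * a) mod r = (i + w * r) mod r"
    using w s(2) by (simp add: algebra_simps)
  then have "((u + w) * a) mod r = i mod r"
    by simp
  then show ?thesis
    unfolding small_multiple_def using u(1) \<open>0 \<le> w\<close> \<open>w < c\<close>
    by (intro bexI[of _ "u + w"]) auto
qed

lemma small_multiple_left_transfer:
  fixes r a b c i :: int
  assumes "1 < a" "a < r" "a * b = 1 + c * r" "a \<le> i" "i < r"
  shows "small_multiple r a b i \<longleftrightarrow> small_multiple (r - a) (r mod (r - a)) (b - c) i"
proof -
  have s: "0 < r - a" "r = a + (r - a)"
    using assms(2) by simp_all
  have "(r mod (r - a)) mod (r - a) = a mod (r - a)"
    using mod_add_self2[of a "r - a"] by simp
  then show ?thesis
    using small_multiple_to_left[OF assms(1) s assms(3-5)] small_multiple_from_left[OF assms(1) s assms(3-5)]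
      small_multiple_multiplier_cong[of "r mod (r - a)" "r - a" a "b - c" i]
    by auto
qed

text \<open>tau r a maps [a, r) onto [0, r - a) and [0, a) onto [r - a, r); the following two lemmas
  compare small multiples on the images of these pieces after the recursive step.\<close>

lemma small_multiple_left_window:
  assumes inv: "is_mod_inverse r a b" and a: "1 < a" "a < r - 1" and y: "1 \<le> y" "y \<le> r - a"
  shows "small_multiple r a b y \<longleftrightarrow> small_multiple (r - a) (r mod (r - a)) (b - (a * b) div r) y"
proof -
  define s a' b' where "s = r - a" and "a' = r mod s" and "b' = b - (a * b) div r"
  have inv': "is_mod_inverse s a' b'"
    using is_mod_inverse_left[OF inv a] by (simp add: s_def a'_def b'_def)
  have s: "1 < s" "r = a + s"
    using a by (simp_all add: s_def)
  consider "y = 1" | "y = s" | "1 < y" "y < s"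
    using y by (fastforce simp: s_def)
  then have "small_multiple r a b y \<longleftrightarrow> small_multiple s a' b' y"
  proof cases
    case 1
    then show ?thesis
      using small_multiple_one[OF inv] small_multiple_one[OF inv'] by simp
  next
    case 2
    have "s mod r = s"
      using a by (intro mod_pos_pos_trivial) (simp_all add: s_def)
    then have "small_multiple r a b (s + a) = small_multiple r a b s"
      using small_multiple_shift[OF inv, of s] s(1) by simp
    moreover have "s + a = r"
      by (simp add: s_def)
    ultimately show ?thesis
      using 2 not_small_multiple_modulus[OF inv] not_small_multiple_modulus[OF inv'] by simp
  next
    case 3
    have "y mod r = y"
      using 3 a by (intro mod_pos_pos_trivial) (simp_all add: s_def)
    then have "small_multiple r a b y = small_multiple r a b (y + a)"
      using small_multiple_shift[OF inv, of y] 3 by simp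
    also have "\<dots> = small_multiple s a' b' (y + a)"
      using small_multiple_left_transfer[of a r b "(a * b) div r" "y + a"] a 3
        mod_inverse_quotient_bounds(4)[OF inv a(1)]
      by (simp add: s_def a'_def b'_def)
    also have "\<dots> = small_multiple s a' b' (y + a')"
      by (rule small_multiple_cong) (simp add: a'_def s(2) mod_add_right_eq)
    also have "\<dots> = small_multiple s a' b' y"
      using small_multiple_shift[OF inv', of y] 3 by simp
    finally show ?thesis .
  qed
  then show ?thesis
    by (simp add: s_def a'_def b'_def)
qed

lemma small_multiple_right_window:
  assumes inv: "is_mod_inverse r a b" and a: "1 < a" "a < r - 1" and x: "1 \<le> x" "x \<le> a"
  shows "small_multiple r a b (r - a + x) \<longleftrightarrow> small_multiple a ((- r) mod a) ((a * b) div r) x"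
proof -
  have inv': "is_mod_inverse a ((- r) mod a) ((a * b) div r)"
    by (rule is_mod_inverse_right[OF inv a])
  show ?thesis
  proof (cases "x = a")
    case True
    then show ?thesis
      using not_small_multiple_modulus[OF inv] not_small_multiple_modulus[OF inv'] by simp
  next
    case False
    have "small_multiple r a b (r - a + x) = small_multiple r a b (x - a)"
    proof (rule small_multiple_cong)
      have "r - a + x = (x - a) + 1 * r"
        by simp
      then show "(r - a + x) mod r = (x - a) mod r"
        by (simp only: mod_mult_self1)
    qed
    also have "\<dots> = small_multiple r a b (x - a + a)"
    proof -
      have "x - a = (r - a + x) + (- 1) * r"
        by simp
      then have "(x - a) mod r = (r - a + x) mod r"
        by (simp only: mod_mult_self1)
      also have "\<dots> = r - a + x"
        using x False a by (intro mod_pos_pos_trivial) simp_all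
      finally have "(x - a) mod r = r - a + x" .
      then show ?thesis
        using small_multiple_shift[OF inv, of "x - a"] x a by simp
    qed
    also have "\<dots> = small_multiple a ((- r) mod a) ((a * b) div r) x"
      using small_multiple_right_transfer[of r a b "(a * b) div r" x] inv x False
        mod_inverse_quotient_bounds(4)[OF inv a(1)]
      by (simp add: is_mod_inverse_def admissible_def)
    finally show ?thesis .
  qed
qed

lemma small_multiple_tau_succ_edge:
  assumes inv: "is_mod_inverse r a b" and a: "a = 1 \<or> a = r - 1"
  shows "small_multiple r a b (tau r a i + 1) \<longleftrightarrow> small_multiple r a b i"
proof -
  have "(tau r a i + 1) mod r = (a * i) mod r"
    using tau_edge[OF a] by (simp add: mod_add_left_eq)
  then have "small_multiple r a b (tau r a i + 1) = small_multiple r a b (a * i)"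
    by (rule small_multiple_cong)
  also have "\<dots> = small_multiple r a b i"
    using a
  proof
    assume "a = r - 1"
    have "a * i = - i + i * r"
      by (simp add: \<open>a = r - 1\<close> algebra_simps)
    then have "small_multiple r a b (a * i) = small_multiple r a b (- i)"
      by (intro small_multiple_cong) (simp only: mod_mult_self1)
    with small_multiple_neg inv \<open>a = r - 1\<close> show ?thesis
      by simp
  qed simp
  finally show ?thesis .
qed

lemma small_multiple_tau_succ_left:
  fixes r a b i :: int
  defines "s \<equiv> r - a" and "b' \<equiv> b - (a * b) div r"
  assumes inv: "is_mod_inverse r a b" and a: "1 < a" "a < r - 1" and i: "a \<le> i" "i < r"
    and IH: "small_multiple s (r mod s) b' (tau s (r mod s) (i mod s) + 1)
      \<longleftrightarrow> small_multiple s (r mod s) b' (i mod s)"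
  shows "small_multiple r a b (tau r a i + 1) \<longleftrightarrow> small_multiple r a b i"
proof -
  define y where "y = tau s (r mod s) (i mod s)"
  have "0 \<le> y" "y < s"
    using bij_betw_apply[OF tau_bij[OF admissible_left], of r a "i mod s"] inv a
    by (simp_all add: y_def s_def is_mod_inverse_def)
  then have "small_multiple r a b (tau r a i + 1) = small_multiple s (r mod s) b' (y + 1)"
    using small_multiple_left_window[OF inv a, of "y + 1"] tau_left[OF a i(1)]
    by (simp add: y_def s_def b'_def)
  also have "\<dots> = small_multiple s (r mod s) b' i"
    using IH by (simp add: y_def)
  also have "\<dots> = small_multiple r a b i"
    using small_multiple_left_transfer[of a r b "(a * b) div r" i] a i
      mod_inverse_quotient_bounds(4)[OF inv a(1)]
    by (simp add: s_def b'_def)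
  finally show ?thesis .
qed

lemma small_multiple_tau_succ_right:
  fixes r a b i :: int
  defines "a' \<equiv> (- r) mod a" and "c \<equiv> (a * b) div r"
  assumes inv: "is_mod_inverse r a b" and a: "1 < a" "a < r - 1" and i: "0 \<le> i" "i < a"
    and IH: "small_multiple a a' c (tau a a' i + 1) \<longleftrightarrow> small_multiple a a' c i"
  shows "small_multiple r a b (tau r a i + 1) \<longleftrightarrow> small_multiple r a b i"
proof -
  define y where "y = tau a a' i"
  have "0 \<le> y" "y < a"
    using bij_betw_apply[OF tau_bij[OF admissible_right], of r a i] inv a i
    by (simp_all add: y_def a'_def is_mod_inverse_def)
  then have "small_multiple r a b (tau r a i + 1) = small_multiple a a' c (y + 1)"
    using small_multiple_right_window[OF inv a, of "y + 1"] tau_right[OF a i(2)]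
    by (simp add: y_def a'_def c_def add.assoc)
  also have "\<dots> = small_multiple a a' c i"
    using IH by (simp add: y_def)
  also have "\<dots> = small_multiple r a b i"
    using small_multiple_right_transfer[of r a b c i] inv i
      mod_inverse_quotient_bounds(4)[OF inv a(1)]
    by (simp add: a'_def c_def is_mod_inverse_def admissible_def)
  finally show ?thesis .
qed

lemma small_multiple_tau_succ:
  assumes "is_mod_inverse r a b" "0 \<le> i" "i < r"
  shows "small_multiple r a b (tau r a i + 1) \<longleftrightarrow> small_multiple r a b i"
proof -
  have "admissible r a"
    using assms(1) by (simp add: is_mod_inverse_def)
  then show ?thesis
    using assms
  proof (induction arbitrary: b i rule: admissible_induct)
    case (edge r a)
    then show ?case
      by (intro small_multiple_tau_succ_edge)
  next
    case (split r a)
    have inv_left: "is_mod_inverse (r - a) (r mod (r - a)) (b - (a * b) div r)"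
      and inv_right: "is_mod_inverse a ((- r) mod a) ((a * b) div r)"
      using is_mod_inverse_left is_mod_inverse_right split.prems(1) split.hyps(2,3) by blast+
    show ?case
    proof (cases "a \<le> i")
      case True
      have "0 \<le> i mod (r - a)" "i mod (r - a) < r - a"
        using split.hyps by simp_all
      from split.IH(1)[OF inv_left this] show ?thesis
        by (rule small_multiple_tau_succ_left[OF split.prems(1) split.hyps(2,3) True split.prems(3)])
    next
      case False
      then have "i < a"
        by simp
      from split.IH(2)[OF inv_right split.prems(2) this] show ?thesis
        by (rule small_multiple_tau_succ_right[OF split.prems(1) split.hyps(2,3) split.prems(2) \<open>i < a\<close>])
    qed
  qed
qed

section \<open>Counting\<close>

lemma bij_betw_mult_mod:
  fixes r a :: int
  assumes "admissible r a"
  shows "bij_betw (\<lambda>t. (t * a) mod r) {1..r} {0..<r}"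
proof -
  have "bij_betw (\<lambda>t. (a * t + 0) mod r) {1..<1 + r} {0..<r}"
    using assms by (intro bij_betw_affine_mod) (simp_all add: admissible_def)
  moreover have "{1..<1 + r} = {1..r}"
    by auto
  ultimately show ?thesis
    by (simp add: mult.commute)
qed

lemma card_tau_below:
  assumes "admissible r a" "0 \<le> k" "k \<le> r"
  shows "card {t\<in>{1..r}. tau r a ((t * a) mod r) < k} = nat k"
proof -
  have bij: "bij_betw (\<lambda>t. tau r a ((t * a) mod r)) {1..r} {0..<r}"
    using bij_betw_trans[OF bij_betw_mult_mod tau_bij, OF assms(1) assms(1)]
    by (simp add: comp_def)
  have "(\<lambda>t. tau r a ((t * a) mod r)) ` {t\<in>{1..r}. tau r a ((t * a) mod r) < k} = {0..<k}"
  proof (intro equalityI subsetI)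
    fix y assume "y \<in> {0..<k}"
    then have "y \<in> (\<lambda>t. tau r a ((t * a) mod r)) ` {1..r}"
      using bij assms(3) unfolding bij_betw_def by auto
    then obtain t where "t \<in> {1..r}" "y = tau r a ((t * a) mod r)"
      by auto
    with \<open>y \<in> {0..<k}\<close> show "y \<in> (\<lambda>t. tau r a ((t * a) mod r)) ` {t\<in>{1..r}. tau r a ((t * a) mod r) < k}"
      by auto
  qed (use bij in \<open>auto simp: bij_betw_def\<close>)
  then have "bij_betw (\<lambda>t. tau r a ((t * a) mod r)) {t\<in>{1..r}. tau r a ((t * a) mod r) < k} {0..<k}"
    by (intro bij_betw_subset[OF bij]) auto
  then show ?thesis
    by (simp add: bij_betw_same_card)
qed

lemma card_tau_small_multiples:
  assumes inv: "is_mod_inverse r a b" and k: "0 \<le> k" "k \<le> r"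
  shows "card {t\<in>{1..b}. tau r a ((t * a) mod r) < k} = card {x\<in>{1..k}. small_multiple r a b x}"
proof -
  have adm: "admissible r a" and b: "b < r"
    using inv by (simp_all add: is_mod_inverse_def)
  define f where "f t = tau r a ((t * a) mod r) + 1" for t
  define A where "A = {t\<in>{1..b}. tau r a ((t * a) mod r) < k}"
  have "inj_on (\<lambda>t. (t * a) mod r) A" "(\<lambda>t. (t * a) mod r) ` A \<subseteq> {0..<r}"
    using bij_betw_mult_mod[OF adm] b unfolding A_def bij_betw_def
    by (auto intro: inj_on_subset)
  then have "inj_on f A"
    using tau_bij[OF adm] unfolding f_def bij_betw_def
    by (auto simp: inj_on_def)
  moreover have "f ` A = {x\<in>{1..k}. small_multiple r a b x}"
  proof (intro equalityI subsetI)
    fix x assume "x \<in> f ` A"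
    then obtain t where t: "t \<in> {1..b}" "tau r a ((t * a) mod r) < k" "x = f t"
      unfolding A_def by auto
    have "0 \<le> tau r a ((t * a) mod r)"
      using bij_betw_apply[OF tau_bij[OF adm]] adm by (auto simp: admissible_def)
    moreover have "small_multiple r a b ((t * a) mod r)"
      using t(1) by (auto simp: small_multiple_def)
    ultimately show "x \<in> {x\<in>{1..k}. small_multiple r a b x}"
      using small_multiple_tau_succ[OF inv, of "(t * a) mod r"] t adm
      by (auto simp: f_def admissible_def)
  next
    fix x assume x: "x \<in> {x\<in>{1..k}. small_multiple r a b x}"
    then have "x - 1 \<in> tau r a ` {0..<r}"
      using tau_bij[OF adm] k by (auto simp: bij_betw_def)
    then obtain i where i: "i \<in> {0..<r}" "tau r a i = x - 1"
      by auto
    then have "small_multiple r a b i"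
      using small_multiple_tau_succ[OF inv, of i] x by auto
    then obtain t where "t \<in> {1..b}" "(t * a) mod r = i"
      using i by (auto simp: small_multiple_def)
    with i x show "x \<in> f ` A"
      unfolding A_def f_def by (intro image_eqI[of _ _ t]) auto
  qed
  ultimately show ?thesis
    unfolding A_def[symmetric] by (metis card_image)
qed

text \<open>k * b + (- k * b) mod r = r * ceiling (k * b / r); this is its increment from k to k + 1,
  where u = ((k + 1) * b) mod r.\<close>

lemma ceiling_step_mod:
  fixes b r u :: int
  assumes "0 < b" "b < r" "0 \<le> u" "u < r"
  shows "b + (- u) mod r - (b - u) mod r = (if u \<in> {1..b} then r else 0)"
proof (cases "u = 0")
  case False
  have "(- u) mod r = r - u"
    using assms False by (simp add: zmod_zminus1_eq_if)
  moreover have "(b - u) mod r = (if u \<le> b then b - u else b - u + r)"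
  proof (cases "u \<le> b")
    case False
    have "(b - u) mod r = (b - u + r) mod r"
      by simp
    also have "\<dots> = b - u + r"
      using assms False by (intro mod_pos_pos_trivial) simp_all
    finally show ?thesis
      using False by simp
  qed (use assms in \<open>simp add: mod_pos_pos_trivial\<close>)
  ultimately show ?thesis
    using False assms by auto
qed (use assms in simp)

lemma card_small_multiples:
  assumes inv: "is_mod_inverse r a b" and "0 \<le> k"
  shows "int (card {x\<in>{1..k}. small_multiple r a b x}) * r = k * b + (- k * b) mod r"
  using assms(2)
proof (induction k rule: int_ge_induct)
  case base
  then show ?case by simp
next
  case (step k)
  have b: "0 < b" "b < r"
    using inv by (simp_all add: is_mod_inverse_def)
  define u where "u = ((k + 1) * b) mod r"
  have u: "0 \<le> u" "u < r"
    using b by (simp_all add: u_def)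
  define S where "S = {x\<in>{1..k}. small_multiple r a b x}"
  have "{1..k + 1} = insert (k + 1) {1..k}"
    using step.hyps by auto
  then have "{x\<in>{1..k + 1}. small_multiple r a b x}
      = (if small_multiple r a b (k + 1) then insert (k + 1) S else S)"
    by (auto simp: S_def)
  moreover have "finite S"
    unfolding S_def by (rule finite_subset[OF _ finite_atLeastAtMost_int]) auto
  moreover have "k + 1 \<notin> S"
    by (simp add: S_def)
  moreover have "small_multiple r a b (k + 1) \<longleftrightarrow> u \<in> {1..b}"
    by (simp add: small_multiple_iff_mod[OF inv] u_def)
  ultimately have "int (card {x\<in>{1..k + 1}. small_multiple r a b x}) * r
      = int (card S) * r + (if u \<in> {1..b} then r else 0)"
    by (simp add: distrib_right)
  also have "(if u \<in> {1..b} then r else 0) = b + (- u) mod r - (b - u) mod r"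
    using ceiling_step_mod[OF b u] by simp
  also have "(- u) mod r = (- ((k + 1) * b)) mod r"
    by (simp only: u_def mod_minus_eq)
  also have "(b - u) mod r = (- k * b) mod r"
  proof -
    have "- k * b = b - (k + 1) * b"
      by (simp add: algebra_simps)
    then show ?thesis
      by (simp add: u_def mod_diff_right_eq)
  qed
  finally show ?case
    using step.IH by (simp add: S_def algebra_simps)
qed

section \<open>The divisors\<close>

lemma sum_fun_apply: "(\<Sum>t\<in>A. f t) x = (\<Sum>t\<in>A. f t x)"
  by (induction A rule: infinite_finite_induct) auto

lemma E1div_apply [simp]: "E1div E1 = 1" "E1div (Dr k) = 0"
  by (simp_all add: E1div_def)

lemma Zdiv_apply [simp]:
  "Zdiv r a i E1 = 0"
  "Zdiv r a i (Dr k) = (if tau r a (i mod r) < int k \<and> int k \<le> r then 1 else 0)"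
  by (simp_all add: Zdiv_def)

lemma Ydiv_apply [simp]:
  "Ydiv r a i E1 = 0"
  "Ydiv r a i (Dr k) = (if int k \<le> tau r a ((i + a) mod r) then 1 else 0)"
  by (simp_all add: Ydiv_def)

lemma DX_apply [simp]:
  "DX r a E1 = 1"
  "DX r a (Dr k) = (if int k \<le> r then of_int ((- int k * inv_b r a) mod r) / of_int r else 0)"
  by (simp_all add: DX_def pcoord1_def)

lemma DY_apply [simp]:
  "DY r a E1 = 0"
  "DY r a (Dr k) = (if int k \<le> r then of_int (r - int k) / of_int r else 0)"
  by (simp_all add: DY_def pcoord2_def)

lemma DZ_apply [simp]:
  "DZ r a E1 = 0"
  "DZ r a (Dr k) = (if int k \<le> r then of_int (int k) / of_int r else 0)"
  by (simp_all add: DZ_def pcoord3_def)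

lemma Zdiv_mod [simp]: "Zdiv r a (i mod r) = Zdiv r a i"
  by (rule ext) (simp add: Zdiv_def split: ray.split)

lemma sum_Zdiv_minus_DZ_apply:
  assumes "finite T" "int k \<le> r"
  shows "(\<Sum>t\<in>T. Zdiv r a (t * a) - DZ r a) (Dr k)
    = of_nat (card {t\<in>T. tau r a ((t * a) mod r) < int k}) - of_nat (card T) * (of_int (int k) / of_int r)"
proof -
  have "(\<Sum>t\<in>T. Zdiv r a (t * a) - DZ r a) (Dr k)
      = (\<Sum>t\<in>T. if tau r a ((t * a) mod r) < int k then 1 else 0) - (\<Sum>t\<in>T. of_int (int k) / of_int r)"
    using assms(2) by (simp add: sum_fun_apply sum_subtractf)
  then show ?thesis
    using assms(1) by (simp add: sum.If_cases Int_def)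
qed

lemma sum_Zdiv_minus_DZ_orbit:
  assumes "admissible r a"
  shows "(\<Sum>t\<in>{1..r}. Zdiv r a (t * a) - DZ r a) = 0"
proof
  fix \<rho>
  have r: "1 < r"
    using assms by (simp add: admissible_def)
  show "(\<Sum>t\<in>{1..r}. Zdiv r a (t * a) - DZ r a) \<rho> = 0 \<rho>"
  proof (cases \<rho>)
    case (Dr k)
    show ?thesis
    proof (cases "int k \<le> r")
      case True
      then show ?thesis
        using card_tau_below[OF assms, of "int k"] r
        by (simp add: Dr sum_Zdiv_minus_DZ_apply)
    qed (simp add: Dr sum_fun_apply)
  qed (simp add: sum_fun_apply)
qed

definition Rsum :: "int \<Rightarrow> int \<Rightarrow> int \<Rightarrow> int \<Rightarrow> qdiv" where
  "Rsum r a b i = (\<Sum>t\<in>{1..(i * b) mod r}. Zdiv r a (t * a) - DZ r a)"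

lemma Rsum_mod: "Rsum r a b (i mod r) = Rsum r a b i"
  by (simp add: Rsum_def mod_mult_left_eq)

lemma Rsum_zero: "Rsum r a b 0 = 0"
  by (simp add: Rsum_def)

lemma Zdiv_mult_inverse:
  assumes "(a * b) mod r = 1"
  shows "Zdiv r a ((i * b) mod r * a) = Zdiv r a i"
proof -
  have "Zdiv r a ((i * b) mod r * a) = Zdiv r a (((i * b) mod r * a) mod r)"
    by simp
  also have "((i * b) mod r * a) mod r = i mod r"
    by (rule mod_inverse_cancel[OF assms])
  finally show ?thesis
    by simp
qed

lemma sum_Zdiv_minus_DZ_pred:
  assumes adm: "admissible r a" and m: "0 \<le> m" "m < r"
  shows "(\<Sum>t\<in>{1..m}. Zdiv r a (t * a) - DZ r a)
    = (\<Sum>t\<in>{1..(m - 1) mod r}. Zdiv r a (t * a) - DZ r a) + (Zdiv r a (m * a) - DZ r a)"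
proof -
  define g where "g t = Zdiv r a (t * a) - DZ r a" for t
  have r: "1 < r"
    using adm by (simp add: admissible_def)
  have sum_last: "(\<Sum>t\<in>{1..n}. g t) = (\<Sum>t\<in>{1..n - 1}. g t) + g n" if "1 \<le> n" for n
  proof -
    have "{1..n} = insert n {1..n - 1}"
      using that by auto
    then show ?thesis
      by (simp add: add.commute)
  qed
  show ?thesis
  proof (cases "m = 0")
    case True
    have "g r = g 0"
      using Zdiv_mod[of r a "r * a"] Zdiv_mod[of r a 0] by (simp add: g_def)
    moreover have "(- 1) mod r = r - 1"
      using r by (simp add: zmod_zminus1_eq_if)
    moreover have "(\<Sum>t\<in>{1..r}. g t) = 0"
      using sum_Zdiv_minus_DZ_orbit[OF adm] by (simp add: g_def)
    ultimately show ?thesis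
      using sum_last[of r] r True by (simp add: g_def)
  next
    case False
    then show ?thesis
      using sum_last[of m] m by (simp add: g_def)
  qed
qed

lemma Zdiv_eq_Rsum:
  assumes inv: "is_mod_inverse r a b"
  shows "Zdiv r a i = DZ r a + Rsum r a b i - Rsum r a b (i - a)"
proof -
  define m where "m = (i * b) mod r"
  have adm: "admissible r a" and r: "0 < r" and ab: "(a * b) mod r = 1"
    using inv by (simp_all add: is_mod_inverse_def admissible_def)
  have "((i - a) * b) mod r = ((i * b) mod r - (a * b) mod r) mod r"
    by (simp add: left_diff_distrib mod_diff_eq)
  then have "Rsum r a b (i - a) = (\<Sum>t\<in>{1..(m - 1) mod r}. Zdiv r a (t * a) - DZ r a)"
    using ab by (simp add: Rsum_def m_def)
  moreover have "Rsum r a b i = (\<Sum>t\<in>{1..m}. Zdiv r a (t * a) - DZ r a)"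
    by (simp add: Rsum_def m_def)
  moreover have "Zdiv r a (m * a) = Zdiv r a i"
    using Zdiv_mult_inverse[OF ab] by (simp add: m_def)
  ultimately have "Rsum r a b i = Rsum r a b (i - a) + (Zdiv r a i - DZ r a)"
    using sum_Zdiv_minus_DZ_pred[OF adm, of m] r by (simp add: m_def)
  then show ?thesis
    by (simp add: algebra_simps)
qed

lemma DX_eq_Rsum:
  assumes inv: "is_mod_inverse r a b" and b: "b = inv_b r a mod r"
  shows "DX r a = E1div + Rsum r a b 1"
proof
  fix \<rho>
  have r: "0 < r" "0 < b" "b < r"
    using inv by (simp_all add: is_mod_inverse_def admissible_def)
  show "DX r a \<rho> = (E1div + Rsum r a b 1) \<rho>"
  proof (cases \<rho>)
    case E1
    then show ?thesis
      by (simp add: Rsum_def sum_fun_apply)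
  next
    case (Dr k)
    show ?thesis
    proof (cases "int k \<le> r")
      case True
      define C where "C = card {t\<in>{1..b}. tau r a ((t * a) mod r) < int k}"
      have "int C * r = int k * b + (- int k * b) mod r"
        using card_tau_small_multiples[OF inv, of "int k"] card_small_multiples[OF inv, of "int k"] True
        by (simp add: C_def)
      then have "(of_int (int C * r) :: rat) = of_int (int k * b) + of_int ((- int k * b) mod r)"
        by simp
      then have "(of_nat C :: rat) - of_int b * (of_int (int k) / of_int r) = of_int ((- int k * b) mod r) / of_int r"
        using r by (simp add: field_simps)
      moreover have "(- int k * inv_b r a) mod r = (- int k * b) mod r"
        by (simp only: b mod_mult_right_eq)
      moreover have "(\<Sum>t\<in>{1..b}. Zdiv r a (t * a) - DZ r a) (Dr k)
          = of_nat C - of_nat (card {1..b}) * (of_int (int k) / of_int r)"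
        unfolding C_def by (rule sum_Zdiv_minus_DZ_apply[OF _ True]) simp
      moreover have "(of_nat (card {1..b}) :: rat) = of_int b"
        using r by simp
      ultimately show ?thesis
        using True r by (simp add: Dr Rsum_def)
    qed (simp add: Dr Rsum_def sum_fun_apply)
  qed
qed

lemma Ydiv_plus_Zdiv:
  assumes "admissible r a"
  shows "Ydiv r a i + Zdiv r a (i + a) = DY r a + DZ r a"
proof
  fix \<rho>
  define T where "T = tau r a ((i + a) mod r)"
  have r: "0 < r" "T < r"
    using bij_betw_apply[OF tau_bij[OF assms], of "(i + a) mod r"] assms
    by (simp_all add: admissible_def T_def)
  show "(Ydiv r a i + Zdiv r a (i + a)) \<rho> = (DY r a + DZ r a) \<rho>"
    using r by (cases \<rho>) (auto simp: T_def[symmetric] add_divide_distrib[symmetric])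
qed

lemma periodic_shift_invariant_const:
  fixes D :: "int \<Rightarrow> 'a"
  assumes adm: "admissible r a" and per: "\<And>i. D i = D (i mod r)" and shift: "\<And>i. D i = D (i - a)"
  shows "D i = D 0"
proof -
  obtain b where inv: "is_mod_inverse r a b"
    using is_mod_inverse_inv_b[OF adm] by blast
  have multiple: "D (n * a) = D 0" if "0 \<le> n" for n
    using that
  proof (induction n rule: int_ge_induct)
    case (step n)
    have "D ((n + 1) * a) = D (n * a)"
      using shift[of "(n + 1) * a"] by (simp add: algebra_simps)
    with step.IH show ?case
      by simp
  qed simp
  have "D i = D (i mod r)"
    by (rule per)
  also have "i mod r = ((i * b) mod r * a) mod r"
    using inv mod_inverse_cancel[of a b r i] by (simp add: is_mod_inverse_def)
  also have "D \<dots> = D ((i * b) mod r * a)"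
    by (rule per[symmetric])
  also have "\<dots> = D 0"
    using inv by (intro multiple) (simp add: is_mod_inverse_def admissible_def)
  finally show ?thesis .
qed

lemma the_periodic_shift_solution:
  fixes F :: "int \<Rightarrow> 'a::ab_group_add"
  assumes adm: "admissible r a" and "P F"
    and solution: "\<And>G. P G \<Longrightarrow> (\<forall>i. G i = G (i mod r)) \<and> G 0 = F 0 \<and>
      (\<forall>i. G i - G (i - a) = F i - F (i - a))"
  shows "(THE G. P G) = F"
proof (rule the_equality)
  show "P F"
    by fact
  fix G assume "P G"
  have "\<forall>i. F i = F (i mod r)"
    using solution[OF \<open>P F\<close>] by blast
  moreover note solution[OF \<open>P G\<close>]
  moreover have "G i - F i = G (i - a) - F (i - a)" for i
    using calculation(2) by (simp add: algebra_simps)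
  ultimately have "G i - F i = G 0 - F 0" for i
    by (intro periodic_shift_invariant_const[OF adm, of "\<lambda>i. G i - F i"]) metis+
  then show "G = F"
    using solution[OF \<open>P G\<close>] by fastforce
qed

lemma Rdiv_eq_Rsum:
  assumes inv: "is_mod_inverse r a b"
  shows "Rdiv r a = Rsum r a b"
  unfolding Rdiv_def
proof (rule the_periodic_shift_solution)
  show "admissible r a"
    using inv by (simp add: is_mod_inverse_def)
  show "(\<forall>i. Rsum r a b i = Rsum r a b (i mod r)) \<and> Rsum r a b 0 = 0 \<and>
      (\<forall>i. Zdiv r a i = DZ r a + Rsum r a b i - Rsum r a b (i - a))"
    using Rsum_mod Rsum_zero Zdiv_eq_Rsum[OF inv] by simp
next
  fix R
  assume R: "(\<forall>i. R i = R (i mod r)) \<and> R 0 = 0 \<and> (\<forall>i. Zdiv r a i = DZ r a + R i - R (i - a))"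
  have "R i - R (i - a) = Zdiv r a i - DZ r a" for i
    using R by (simp add: algebra_simps)
  moreover have "Rsum r a b i - Rsum r a b (i - a) = Zdiv r a i - DZ r a" for i
    using Zdiv_eq_Rsum[OF inv, of i] by (simp add: algebra_simps)
  ultimately show "(\<forall>i. R i = R (i mod r)) \<and> R 0 = Rsum r a b 0 \<and>
      (\<forall>i. R i - R (i - a) = Rsum r a b i - Rsum r a b (i - a))"
    using R by (simp add: Rsum_zero)
qed

lemma Rdiv_mod: "admissible r a \<Longrightarrow> Rdiv r a (i mod r) = Rdiv r a i"
  using Rsum_mod Rdiv_eq_Rsum is_mod_inverse_inv_b by metis

lemma Rdiv_zero: "admissible r a \<Longrightarrow> Rdiv r a 0 = 0"
  using Rsum_zero Rdiv_eq_Rsum is_mod_inverse_inv_b by metis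

lemma DX_eq_Rdiv: "admissible r a \<Longrightarrow> DX r a = E1div + Rdiv r a 1"
  using DX_eq_Rsum Rdiv_eq_Rsum is_mod_inverse_inv_b by metis

lemma Zdiv_eq_Rdiv:
  assumes "admissible r a"
  shows "Zdiv r a i = DZ r a + Rdiv r a i - Rdiv r a (i - a)"
  using Zdiv_eq_Rsum Rdiv_eq_Rsum is_mod_inverse_inv_b[OF assms] by metis

lemma Ydiv_eq_Rdiv:
  assumes "admissible r a"
  shows "Ydiv r a i = DY r a + Rdiv r a i - Rdiv r a (i + a)"
proof -
  have "Ydiv r a i = DY r a + DZ r a - Zdiv r a (i + a)"
    using Ydiv_plus_Zdiv[OF assms, of i] by (simp add: eq_diff_eq)
  then show ?thesis
    unfolding Zdiv_eq_Rdiv[OF assms, of "i + a"] by (simp add: algebra_simps)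
qed

lemma Xdiv_eq_Rdiv:
  assumes adm: "admissible r a"
  shows "Xdiv r a i = DX r a + Rdiv r a i - Rdiv r a (i + 1)"
proof -
  define X where "X i = DX r a + Rdiv r a i - Rdiv r a (i + 1)" for i
  have "Rdiv r a (i mod r + 1) = Rdiv r a (i + 1)" for i
    using Rdiv_mod[OF adm, of "i mod r + 1"] Rdiv_mod[OF adm, of "i + 1"] by (simp add: mod_add_left_eq)
  then have X_mod: "X i = X (i mod r)" for i
    using Rdiv_mod[OF adm] by (simp add: X_def)
  have X_rec: "X i + Zdiv r a (i + 1) = Zdiv r a i + X (i - a)" for i
  proof -
    have "i + 1 - a = i - a + 1"
      by simp
    then show ?thesis
      using Zdiv_eq_Rdiv[OF adm, of i] Zdiv_eq_Rdiv[OF adm, of "i + 1"]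
      by (simp add: X_def algebra_simps)
  qed
  have "Xdiv r a = X"
    unfolding Xdiv_def
  proof (rule the_periodic_shift_solution[OF adm])
    show "(\<forall>i. X i = X (i mod r)) \<and> X 0 = E1div \<and> (\<forall>i. X i + Zdiv r a (i + 1) = Zdiv r a i + X (i - a))"
      using X_mod X_rec Rdiv_zero[OF adm] DX_eq_Rdiv[OF adm] by (simp add: X_def)
  next
    fix X'
    assume X': "(\<forall>i. X' i = X' (i mod r)) \<and> X' 0 = E1div \<and> (\<forall>i. X' i + Zdiv r a (i + 1) = Zdiv r a i + X' (i - a))"
    have "X' i - X' (i - a) = X i - X (i - a)" for i
    proof -
      have "X' i + Zdiv r a (i + 1) = Zdiv r a i + X' (i - a)"
        using X' by blast
      then have "X' i - X' (i - a) = Zdiv r a i - Zdiv r a (i + 1)"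
        by (simp add: algebra_simps)
      moreover have "X i - X (i - a) = Zdiv r a i - Zdiv r a (i + 1)"
        using X_rec[of i] by (simp add: algebra_simps)
      ultimately show ?thesis
        by simp
    qed
    then show "(\<forall>i. X' i = X' (i mod r)) \<and> X' 0 = X 0 \<and> (\<forall>i. X' i - X' (i - a) = X i - X (i - a))"
      using X' Rdiv_zero[OF adm] DX_eq_Rdiv[OF adm] by (simp add: X_def)
  qed
  then show ?thesis
    by (simp add: X_def)
qed

theorem mainTheorem8:
  fixes r a :: int
  assumes "r > 1" and "0 < a" and "a < r" and "coprime r a"
  shows "\<forall>i\<in>{0..<r}.
           Xdiv r a i = DX r a + Rdiv r a i - Rdiv r a (i + 1) \<and>
           Ydiv r a i = DY r a + Rdiv r a i - Rdiv r a (i + a) \<and>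
           Zdiv r a i = DZ r a + Rdiv r a i - Rdiv r a (i - a)"
proof -
  have "admissible r a"
    using assms by (simp add: admissible_def)
  then show ?thesis
    using Xdiv_eq_Rdiv Ydiv_eq_Rdiv Zdiv_eq_Rdiv by blast
qed

end
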